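(* Let $A\in\mathbb{C}^{m\times n}$, $B\in\mathbb{C}^{n\times p}$, $C\in\mathbb{C}^{p\times q}$ and $M=ABC$. For any $(AB)^{(1)}\in\{(AB)^{(1)}\}$ and $(BC)^{(1)}\in\{(BC)^{(1)}\}$, put $P=I_p-(AB)^{(1)}AB$ and $Q=I_n-BC(BC)^{(1)}$. Then for every $\{1\}$-generalized inverse $(QBP)^{(1)}$ of $QBP$, the matrix $$X=(BC)^{(1)}B(AB)^{(1)}-(BC)^{(1)}BP(QBP)^{(1)}QB(AB)^{(1)}$$ satisfies $MXM=M$.
   Context: For $X\in\mathbb{C}^{p\times q}$, a matrix $G\in\mathbb{C}^{q\times p}$ is called a $\{1\}$-generalized inverse of $X$ (written $X^{(1)}$) if $XGX=X$; $\{X^{(1)}\}$ denotes the set of all such $G$. $I_k$ is the $k\times k$ identity matrix. *)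

theory Defs
  imports "Jordan_Normal_Form.Matrix" Complex_Main
begin

definition is_g1_inverse :: "complex mat \<Rightarrow> complex mat \<Rightarrow> nat \<Rightarrow> nat \<Rightarrow> bool" where
  "is_g1_inverse X G p q \<longleftrightarrow> X \<in> carrier_mat p q \<and> G \<in> carrier_mat q p \<and> X * G * X = X"

end

theory Submission
  imports Defs
begin

text \<open>
  Write \<open>M = ABC\<close> and let \<open>ABi\<close>, \<open>BCi\<close> be the given \<open>{1}\<close>-inverses. Their defining
  equations give \<open>ABP = 0\<close>, \<open>QBC = 0\<close>, \<open>ABi AB = I - P\<close> and \<open>BC BCi = I - Q\<close>. Hence
  \<open>M BCi B ABi M = A(I - Q)B(I - P)C = M + A(QBP)C\<close>; and since \<open>QB(I - P)C = -QBPC\<close>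
  and \<open>A(I - Q)BP = -AQBP\<close>, the correction term equals \<open>A(QBP)G(QBP)C = A(QBP)C\<close> for a
  \<open>{1}\<close>-inverse \<open>G\<close> of \<open>QBP\<close>.
\<close>

text \<open>
  Variants of library rules whose side conditions are equations between dimensions: the
  simplifier discharges these, whereas it cannot guess the dimensions in \<open>carrier_mat\<close>
  premises.
\<close>

lemma assoc_mult_mat_dim:
  fixes A B C :: "'a :: semiring_0 mat"
  assumes "dim_col A = dim_row B" and "dim_col B = dim_row C"
  shows "A * B * C = A * (B * C)"
  using assms by (intro assoc_mult_mat[of _ _ "dim_row B" _ "dim_row C" _ "dim_col C"] carrier_matI) auto

lemma mult_minus_distrib_mat_dim:
  fixes A B C :: "'a :: ring mat"
  assumes "dim_col A = dim_row B" and "dim_row C = dim_row B" and "dim_col C = dim_col B"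
  shows "A * (B - C) = A * B - A * C"
  using assms by (intro mult_minus_distrib_mat[of _ _ "dim_row B" _ "dim_col B"] carrier_matI) auto

lemma minus_mult_distrib_mat_dim:
  fixes A B C :: "'a :: ring mat"
  assumes "dim_row B = dim_row A" and "dim_col B = dim_col A" and "dim_col A = dim_row C"
  shows "(A - B) * C = A * C - B * C"
  using assms by (intro minus_mult_distrib_mat[of _ _ "dim_row C" _ _ "dim_col C"] carrier_matI) auto

lemma zero_minus_mat:
  fixes A :: "'a :: group_add mat"
  shows "dim_row A = nr \<Longrightarrow> dim_col A = nc \<Longrightarrow> 0\<^sub>m nr nc - A = - A"
  by (intro eq_matI) auto

lemma minus_zero_mat:
  fixes A :: "'a :: group_add mat"
  shows "dim_row A = nr \<Longrightarrow> dim_col A = nc \<Longrightarrow> A - 0\<^sub>m nr nc = A"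
  by (intro eq_matI) auto

lemma minus_uminus_mat:
  fixes A B :: "'a :: group_add mat"
  shows "dim_row B = dim_row A \<Longrightarrow> dim_col B = dim_col A \<Longrightarrow> A - - B = A + B"
  by (intro eq_matI) auto

lemma add_minus_cancel_mat:
  fixes A B :: "'a :: group_add mat"
  shows "dim_row B = dim_row A \<Longrightarrow> dim_col B = dim_col A \<Longrightarrow> A + B - B = A"
  by (intro eq_matI) auto

lemma g1_inverse_right_annihilator:
  fixes X G :: "'a :: ring_1 mat"
  assumes X: "X \<in> carrier_mat r c" and G: "G \<in> carrier_mat c r" and XGX: "X * G * X = X"
  shows "X * (1\<^sub>m c - G * X) = 0\<^sub>m r c"
proof -
  have "X * (1\<^sub>m c - G * X) = X - X * G * X"
    using X G by (subst mult_minus_distrib_mat[OF X]) auto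
  then show ?thesis using X by (simp add: XGX)
qed

lemma g1_inverse_left_annihilator:
  fixes X G :: "'a :: ring_1 mat"
  assumes X: "X \<in> carrier_mat r c" and G: "G \<in> carrier_mat c r" and XGX: "X * G * X = X"
  shows "(1\<^sub>m r - X * G) * X = 0\<^sub>m r c"
proof -
  have "(1\<^sub>m r - X * G) * X = X - X * G * X"
    using X G by (subst minus_mult_distrib_mat[OF _ _ X]) auto
  then show ?thesis using X by (simp add: XGX)
qed

lemma one_minus_one_minus_mat:
  fixes Y :: "'a :: ring_1 mat"
  assumes "Y \<in> carrier_mat n n"
  shows "1\<^sub>m n - (1\<^sub>m n - Y) = Y"
  using assms by (intro eq_matI) auto

locale g1_inverse_pair =
  fixes A B C ABi BCi :: "'a :: ring_1 mat" and m n p q :: nat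
  assumes A: "A \<in> carrier_mat m n" and B: "B \<in> carrier_mat n p" and C: "C \<in> carrier_mat p q"
    and ABi: "ABi \<in> carrier_mat p m" and BCi: "BCi \<in> carrier_mat q n"
    and AB_g1: "A * B * ABi * (A * B) = A * B"
    and BC_g1: "B * C * BCi * (B * C) = B * C"
begin

definition P :: "'a mat" where "P = 1\<^sub>m p - ABi * (A * B)"
definition Q :: "'a mat" where "Q = 1\<^sub>m n - B * C * BCi"

lemma P_carrier: "P \<in> carrier_mat p p"
  using A B ABi by (auto simp: P_def intro!: minus_carrier_mat)

lemma Q_carrier: "Q \<in> carrier_mat n n"
  using B C BCi by (auto simp: Q_def intro!: minus_carrier_mat)

lemmas dims = carrier_matD[OF A] carrier_matD[OF B] carrier_matD[OF C] carrier_matD[OF ABi]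
  carrier_matD[OF BCi] carrier_matD[OF P_carrier] carrier_matD[OF Q_carrier]

lemmas mat_simps = dims assoc_mult_mat_dim mult_minus_distrib_mat_dim minus_mult_distrib_mat_dim
  zero_minus_mat minus_zero_mat minus_uminus_mat

lemma AB_P: "A * B * P = 0\<^sub>m m p"
  unfolding P_def using A B ABi AB_g1 by (intro g1_inverse_right_annihilator) auto

lemma Q_BC: "Q * (B * C) = 0\<^sub>m n q"
  unfolding Q_def using B C BCi BC_g1 by (intro g1_inverse_left_annihilator) auto

lemma ABi_AB: "ABi * (A * B) = 1\<^sub>m p - P"
  unfolding P_def using A B ABi by (simp add: one_minus_one_minus_mat)

lemma BC_BCi: "B * C * BCi = 1\<^sub>m n - Q"
  unfolding Q_def using B C BCi by (simp add: one_minus_one_minus_mat)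

lemma A_B_complement_P_C: "A * (B * ((1\<^sub>m p - P) * C)) = A * B * C"
proof -
  have "A * (B * ((1\<^sub>m p - P) * C)) = A * B * C - A * B * P * C"
    by (simp add: mat_simps)
  then show ?thesis
    using AB_P by (simp add: mat_simps)
qed

lemma Q_B_complement_P_C: "Q * (B * ((1\<^sub>m p - P) * C)) = - (Q * B * P * C)"
  using Q_BC by (simp add: mat_simps)

lemma sandwich_first_term:
  "A * B * C * (BCi * B * ABi) * (A * B * C) = A * B * C + A * (Q * B * P) * C"
proof -
  define Y where "Y = B * ((1\<^sub>m p - P) * C)"
  have Y: "Y \<in> carrier_mat n q"
    using B C P_carrier by (auto simp: Y_def intro!: minus_carrier_mat)
  have "A * B * C * (BCi * B * ABi) * (A * B * C)
      = A * ((B * C * BCi) * (B * ((ABi * (A * B)) * C)))"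
    by (simp add: mat_simps)
  also have "\<dots> = A * ((1\<^sub>m n - Q) * Y)"
    by (simp only: ABi_AB BC_BCi Y_def)
  also have "\<dots> = A * Y - A * (Q * Y)"
    using Y by (simp add: mat_simps)
  also have "\<dots> = A * B * C - A * (- (Q * B * P * C))"
    by (simp only: Y_def A_B_complement_P_C Q_B_complement_P_C)
  also have "\<dots> = A * B * C + A * (Q * B * P) * C"
    by (simp add: mat_simps)
  finally show ?thesis .
qed

lemma sandwich_second_term:
  assumes G: "G \<in> carrier_mat p n"
  shows "A * B * C * (BCi * B * P * G * Q * B * ABi) * (A * B * C)
    = A * (Q * B * P * G * (Q * B * P)) * C"
proof -
  have "A * B * C * (BCi * B * P * G * Q * B * ABi) * (A * B * C)
      = A * ((B * C * BCi) * (B * P)) * G * (Q * (B * ((ABi * (A * B)) * C)))"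
    using G by (simp add: mat_simps)
  also have "\<dots> = A * ((1\<^sub>m n - Q) * (B * P)) * G * (- (Q * B * P * C))"
    by (simp only: ABi_AB BC_BCi Q_B_complement_P_C)
  also have "\<dots> = A * (Q * B * P * G * (Q * B * P)) * C"
    using G AB_P by (simp add: mat_simps)
  finally show ?thesis .
qed

lemma triple_product_g1_inverse:
  assumes G: "G \<in> carrier_mat p n" and QBP_g1: "Q * B * P * G * (Q * B * P) = Q * B * P"
  shows "A * B * C * (BCi * B * ABi - BCi * B * P * G * Q * B * ABi) * (A * B * C) = A * B * C"
proof -
  have "A * B * C * (BCi * B * ABi - BCi * B * P * G * Q * B * ABi) * (A * B * C)
      = A * B * C * (BCi * B * ABi) * (A * B * C)
        - A * B * C * (BCi * B * P * G * Q * B * ABi) * (A * B * C)"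
    using G by (simp add: dims mult_minus_distrib_mat_dim minus_mult_distrib_mat_dim del: assoc_mult_mat)
  also have "\<dots> = (A * B * C + A * (Q * B * P) * C) - A * (Q * B * P) * C"
    by (simp only: sandwich_first_term sandwich_second_term[OF G] QBP_g1)
  also have "\<dots> = A * B * C"
    using dims by (simp add: add_minus_cancel_mat)
  finally show ?thesis .
qed

end

theorem theorem3p4:
  fixes A B C ABi BCi QBPi :: "complex mat" and m n p q :: nat
  assumes "A \<in> carrier_mat m n" and "B \<in> carrier_mat n p" and "C \<in> carrier_mat p q"
    and "is_g1_inverse (A * B) ABi m p"
    and "is_g1_inverse (B * C) BCi n q"
    and "is_g1_inverse ((1\<^sub>m n - B * C * BCi) * B * (1\<^sub>m p - ABi * (A * B)))
           QBPi n p"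
  shows "A * B * C * (BCi * B * ABi
           - BCi * B * (1\<^sub>m p - ABi * (A * B)) * QBPi * (1\<^sub>m n - B * C * BCi) * B * ABi)
         * (A * B * C) = A * B * C"
proof -
  interpret g1_inverse_pair A B C ABi BCi m n p q
    using assms(1-5) by unfold_locales (auto simp: is_g1_inverse_def)
  show ?thesis
    using assms(6) triple_product_g1_inverse unfolding is_g1_inverse_def P_def Q_def by blast
qed

end
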